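(* Assume $\max\{\mathrm{cov}(\mathcal{M}),\mathrm{cov}(\mathcal{N})\}=\mathfrak{c}$. Then there is a set $\mathcal{S}$ of Turing degrees with $|\mathcal{S}|=\mathfrak{c}$ that is an antichain under $\le_T$ and such that $\mathbb{R}_{\mathcal{S}}$ has the following property: for every collection of $\mathfrak{c}$ many pairwise disjoint pairs $(x,y)$ of elements of $\mathbb{R}_{\mathcal{S}}$ such that in each pair $x$ and $y$ have different Turing degrees, there are pairs $(x_1,y_1),(x_2,y_2)$ in the collection with $x_1<x_2$ and $y_1<y_2$, and pairs $(w_1,z_1),(w_2,z_2)$ in the collection with $w_1<w_2$ but $z_1>z_2$.
   Context: $\mathfrak{c}=2^{\aleph_0}$; $\mathrm{cov}(\mathcal{M})$ (resp. $\mathrm{cov}(\mathcal{N})$) is the least number of meager (resp. Lebesgue null) sets needed to cover $\mathbb{R}$. $\mathbb{R}_{\mathcal{S}}$ is the set of reals whose Turing degree lies in $\mathcal{S}$. A collection of pairs $\{(x_\alpha,y_\alpha)\}$ is pairwise disjoint if $x_\alpha\ne y_\alpha$ and $\{x_\alpha,y_\alpha\}\cap\{x_\beta,y_\beta\}=\emptyset$ for $\alpha\ne\beta$. *)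

theory Defs
  imports "HOL-Analysis.Analysis" "HOL-Probability.Probability"
    "HOL-Library.Equipollence" "HOL-Library.Nat_Bijection"
begin

definition nowhere_dense :: "real set \<Rightarrow> bool" where
  "nowhere_dense A \<longleftrightarrow> interior (closure A) = {}"

definition meager :: "real set \<Rightarrow> bool" where
  "meager A \<longleftrightarrow> (\<exists>F. countable F \<and> (\<forall>B\<in>F. nowhere_dense B) \<and> A \<subseteq> \<Union>F)"

definition lebesgue_null :: "real set \<Rightarrow> bool" where
  "lebesgue_null A \<longleftrightarrow> A \<in> null_sets lebesgue"

definition cov_eq_continuum :: "(real set \<Rightarrow> bool) \<Rightarrow> bool" where
  "cov_eq_continuum I \<longleftrightarrow>
     (\<forall>F. F \<prec> (UNIV :: real set) \<and> (\<forall>A\<in>F. I A) \<longrightarrow> \<Union>F \<noteq> UNIV)"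

text \<open>Primitive recursion scheme on argument lists: f (0#xs) = g xs,
  f (Suc y # xs) = h (y # f (y#xs) # xs).\<close>
fun prim_rec_op :: "(nat list \<Rightarrow> nat) \<Rightarrow> (nat list \<Rightarrow> nat) \<Rightarrow> nat list \<Rightarrow> nat" where
  "prim_rec_op g h [] = 0"
| "prim_rec_op g h (y # xs) = rec_nat (g xs) (\<lambda>k r. h (k # r # xs)) y"

text \<open>rec_in orc n f: f is an n-ary total function recursive in the oracle orc
  (Kleene's mu-recursive functions with minimisation restricted to regular functions,
  relativised to orc).  Only the values of f on lists of length n are meaningful.\<close>
inductive rec_in :: "(nat \<Rightarrow> nat) \<Rightarrow> nat \<Rightarrow> (nat list \<Rightarrow> nat) \<Rightarrow> bool" for orc where
  zero: "rec_in orc n (\<lambda>_. 0)"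
| succ: "rec_in orc 1 (\<lambda>xs. Suc (hd xs))"
| proj: "i < n \<Longrightarrow> rec_in orc n (\<lambda>xs. xs ! i)"
| oracle_call: "rec_in orc 1 (\<lambda>xs. orc (hd xs))"
| comp: "rec_in orc m g \<Longrightarrow> length fs = m \<Longrightarrow> (\<forall>i<m. rec_in orc n (fs ! i)) \<Longrightarrow>
         rec_in orc n (\<lambda>xs. g (map (\<lambda>f. f xs) fs))"
| prim_rec: "rec_in orc n g \<Longrightarrow> rec_in orc (Suc (Suc n)) h \<Longrightarrow>
         rec_in orc (Suc n) (prim_rec_op g h)"
| minimize: "rec_in orc (Suc n) f \<Longrightarrow> (\<forall>xs. length xs = n \<longrightarrow> (\<exists>y. f (y # xs) = 0)) \<Longrightarrow>
         rec_in orc n (\<lambda>xs. LEAST y. f (y # xs) = 0)"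

definition turing_reducible_fun :: "(nat \<Rightarrow> nat) \<Rightarrow> (nat \<Rightarrow> nat) \<Rightarrow> bool" where
  "turing_reducible_fun A B \<longleftrightarrow> (\<exists>f. rec_in B 1 f \<and> (\<forall>n. f [n] = A n))"

text \<open>A real x is identified (up to Turing equivalence) with the sequence of its dyadic
  approximations n \<mapsto> floor(x * 2^n), coded into nat by the standard bijection int_encode.\<close>
definition real_oracle :: "real \<Rightarrow> nat \<Rightarrow> nat" where
  "real_oracle x n = int_encode \<lfloor>x * 2 ^ n\<rfloor>"

definition turing_le :: "real \<Rightarrow> real \<Rightarrow> bool" (infix \<open>\<le>\<^sub>T\<close> 50) where
  "x \<le>\<^sub>T y \<longleftrightarrow> turing_reducible_fun (real_oracle x) (real_oracle y)"

definition turing_equiv :: "real \<Rightarrow> real \<Rightarrow> bool" (infix \<open>\<equiv>\<^sub>T\<close> 50) where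
  "x \<equiv>\<^sub>T y \<longleftrightarrow> x \<le>\<^sub>T y \<and> y \<le>\<^sub>T x"

definition tdeg :: "real \<Rightarrow> real set" where
  "tdeg x = {y. y \<equiv>\<^sub>T x}"

definition is_turing_degree :: "real set \<Rightarrow> bool" where
  "is_turing_degree D \<longleftrightarrow> (\<exists>x. D = tdeg x)"

definition degree_le :: "real set \<Rightarrow> real set \<Rightarrow> bool" where
  "degree_le D E \<longleftrightarrow> (\<exists>x\<in>D. \<exists>y\<in>E. x \<le>\<^sub>T y)"

definition degree_antichain :: "real set set \<Rightarrow> bool" where
  "degree_antichain S \<longleftrightarrow> (\<forall>D\<in>S. \<forall>E\<in>S. D \<noteq> E \<longrightarrow> \<not> degree_le D E)"

definition reals_of_degrees :: "real set set \<Rightarrow> real set" where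
  "reals_of_degrees S = {x. tdeg x \<in> S}"

definition pairwise_disjoint_pairs :: "(real \<times> real) set \<Rightarrow> bool" where
  "pairwise_disjoint_pairs C \<longleftrightarrow>
     (\<forall>(x,y)\<in>C. x \<noteq> y) \<and>
     (\<forall>p\<in>C. \<forall>q\<in>C. p \<noteq> q \<longrightarrow> {fst p, snd p} \<inter> {fst q, snd q} = {})"

end

(* Enumerate the subsets c of Q x Q in a well-order of type continuum.  Each c codes a set
   monotone_curves c, the union of the graph of a decreasing and of an increasing partial
   injection of the reals, and every set of pairs with injective projections and no increasing
   (or no decreasing) pair lies in some monotone_curves c up to countably many points.  Along
   the enumeration choose reals g a from a perfect Turing antichain, avoiding the fewer than
   continuum many degrees that some earlier curve links to an earlier chosen degree.  A
   collection C as in the statement then meets each monotone_curves c only in pairs whose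
   degrees were chosen no later than c, i.e. in fewer than continuum pairs; as C has size
   continuum, it has both an increasing and a decreasing pair. *)

theory Submission
  imports Defs "HOL-Library.Sublist" "HOL-Library.Countable_Set_Type"
begin

unbundle cardinal_syntax

section \<open>Oracle programs\<close>

text \<open>Programs for the functions of \<open>rec_in\<close>: unlike those functions, which are arbitrary off
  their arity, programs form a countable set, and their evaluation makes the use of the oracle
  explicit.\<close>

datatype prog = Zero | Succ | Proj nat | Oracle | Comp prog "prog list" | Rec prog prog | Min prog

instance prog :: countable by countable_datatype

inductive eval_prog :: "(nat \<Rightarrow> nat) \<Rightarrow> prog \<Rightarrow> nat list \<Rightarrow> nat \<Rightarrow> bool" for orc where
  eval_Zero: "eval_prog orc Zero xs 0"
| eval_Succ: "eval_prog orc Succ xs (Suc (hd xs))"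
| eval_Proj: "eval_prog orc (Proj i) xs (xs ! i)"
| eval_Oracle: "eval_prog orc Oracle xs (orc (hd xs))"
| eval_Comp: "length vs = length ps \<Longrightarrow> (\<forall>i<length ps. eval_prog orc (ps ! i) xs (vs ! i)) \<Longrightarrow>
    eval_prog orc g vs v \<Longrightarrow> eval_prog orc (Comp g ps) xs v"
| eval_Rec0: "eval_prog orc g xs v \<Longrightarrow> eval_prog orc (Rec g h) (0 # xs) v"
| eval_RecSuc: "eval_prog orc (Rec g h) (y # xs) r \<Longrightarrow> eval_prog orc h (y # r # xs) v \<Longrightarrow>
    eval_prog orc (Rec g h) (Suc y # xs) v"
| eval_Min: "eval_prog orc f (y # xs) 0 \<Longrightarrow> (\<forall>z<y. \<exists>v. v \<noteq> 0 \<and> eval_prog orc f (z # xs) v) \<Longrightarrow>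
    eval_prog orc (Min f) xs y"

lemma eval_prog_det: "eval_prog orc p xs v \<Longrightarrow> eval_prog orc p xs w \<Longrightarrow> v = w"
proof (induction arbitrary: w rule: eval_prog.induct)
  case (eval_Comp vs ps xs g v)
  from eval_Comp.prems obtain vs' where "length vs' = length ps"
    and "\<forall>i<length ps. eval_prog orc (ps ! i) xs (vs' ! i)" and "eval_prog orc g vs' w"
    by (cases rule: eval_prog.cases) auto
  moreover from calculation have "vs' = vs"
    using eval_Comp.IH(1) eval_Comp.hyps(1) by (intro nth_equalityI) auto
  ultimately show ?case using eval_Comp.IH(2) by simp
next
  case (eval_Rec0 g xs v h)
  from eval_Rec0.prems show ?case by (cases rule: eval_prog.cases) (auto intro: eval_Rec0.IH)
next
  case (eval_RecSuc g h y xs r v)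
  from eval_RecSuc.prems obtain r'
    where "eval_prog orc (Rec g h) (y # xs) r'" "eval_prog orc h (y # r' # xs) w"
    by (cases rule: eval_prog.cases) auto
  then show ?case using eval_RecSuc.IH by metis
next
  case (eval_Min f y xs)
  from eval_Min.prems obtain w0: "eval_prog orc f (w # xs) 0"
    and below_w: "\<forall>z<w. \<exists>v. v \<noteq> 0 \<and> eval_prog orc f (z # xs) v"
    by (cases rule: eval_prog.cases) auto
  show ?case
  proof (rule linorder_cases)
    assume "y < w"
    then show ?thesis using below_w eval_Min.IH(1) by fastforce
  next
    assume "w < y"
    then show ?thesis using eval_Min.IH(2) w0 by fastforce
  qed
qed (auto elim: eval_prog.cases)

lemma rec_in_imp_eval_prog:
  "rec_in orc n f \<Longrightarrow> \<exists>p. \<forall>xs. length xs = n \<longrightarrow> eval_prog orc p xs (f xs)"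
proof (induction rule: rec_in.induct)
  case (comp m g fs n)
  from comp.IH obtain pg where pg: "\<forall>xs. length xs = m \<longrightarrow> eval_prog orc pg xs (g xs)" by blast
  from comp.IH(2) obtain pf
    where pf: "\<And>i. i < m \<Longrightarrow> \<forall>xs. length xs = n \<longrightarrow> eval_prog orc (pf i) xs ((fs ! i) xs)"
    by metis
  have "eval_prog orc (Comp pg (map pf [0..<m])) xs (g (map (\<lambda>f. f xs) fs))"
    if "length xs = n" for xs
    by (rule eval_Comp[where vs = "map (\<lambda>f. f xs) fs"]) (use comp.hyps(2) pf pg that in auto)
  then show ?case by blast
next
  case (prim_rec n g h)
  from prim_rec.IH obtain pg ph where pg: "\<forall>xs. length xs = n \<longrightarrow> eval_prog orc pg xs (g xs)"
    and ph: "\<forall>xs. length xs = Suc (Suc n) \<longrightarrow> eval_prog orc ph xs (h xs)" by blast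
  have "eval_prog orc (Rec pg ph) (y # xs) (prim_rec_op g h (y # xs))" if "length xs = n" for y xs
    by (induction y) (use pg ph that in \<open>auto intro: eval_Rec0 eval_RecSuc\<close>)
  then have "\<forall>xs. length xs = Suc n \<longrightarrow> eval_prog orc (Rec pg ph) xs (prim_rec_op g h xs)"
    by (metis length_Suc_conv)
  then show ?case by blast
next
  case (minimize n f)
  from minimize.IH obtain pf where "\<forall>xs. length xs = Suc n \<longrightarrow> eval_prog orc pf xs (f xs)" by blast
  then have pf: "eval_prog orc pf (y # xs) (f (y # xs))" if "length xs = n" for y xs
    using that by simp
  have "eval_prog orc (Min pf) xs (LEAST y. f (y # xs) = 0)" if len: "length xs = n" for xs
  proof (rule eval_Min)
    obtain y where "f (y # xs) = 0" using minimize.hyps(2) len by blast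
    then have "f ((LEAST y. f (y # xs) = 0) # xs) = 0" by (rule LeastI)
    then show "eval_prog orc pf ((LEAST y. f (y # xs) = 0) # xs) 0"
      using pf[OF len, of "LEAST y. f (y # xs) = 0"] by simp
    show "\<forall>z<(LEAST y. f (y # xs) = 0). \<exists>v. v \<noteq> 0 \<and> eval_prog orc pf (z # xs) v"
      using pf[OF len] not_less_Least by blast
  qed
  then show ?case by blast
qed (auto intro: eval_prog.intros)

definition eval_stable :: "(nat \<Rightarrow> nat) \<Rightarrow> prog \<Rightarrow> nat list \<Rightarrow> nat \<Rightarrow> nat \<Rightarrow> bool" where
  "eval_stable orc p xs v N \<longleftrightarrow> (\<forall>orc'. (\<forall>u<N. orc' u = orc u) \<longrightarrow> eval_prog orc' p xs v)"

lemma eval_prog_eventually_stable: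
  "eval_prog orc p xs v \<Longrightarrow> \<forall>\<^sub>F N in sequentially. eval_stable orc p xs v N"
proof (induction rule: eval_prog.induct)
  case (eval_Zero xs)
  show ?case by (simp add: eval_stable_def eval_prog.eval_Zero)
next
  case (eval_Succ xs)
  show ?case by (simp add: eval_stable_def eval_prog.eval_Succ)
next
  case (eval_Proj i xs)
  show ?case by (simp add: eval_stable_def eval_prog.eval_Proj)
next
  case (eval_Oracle xs)
  have "eval_stable orc Oracle xs (orc (hd xs)) N" if "Suc (hd xs) \<le> N" for N
  proof (unfold eval_stable_def, intro allI impI)
    fix orc' assume "\<forall>u<N. orc' u = orc u"
    then have "orc' (hd xs) = orc (hd xs)" using that by simp
    then show "eval_prog orc' Oracle xs (orc (hd xs))"
      using eval_prog.eval_Oracle[of orc' xs] by simp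
  qed
  then show ?case by (rule eventually_sequentiallyI)
next
  case (eval_Comp vs ps xs g v)
  have args: "\<forall>\<^sub>F N in sequentially. \<forall>i\<in>{..<length ps}. eval_stable orc (ps ! i) xs (vs ! i) N"
    using eval_Comp.IH(1) by (intro eventually_ball_finite) auto
  have "eval_stable orc (Comp g ps) xs v N"
    if "\<forall>i\<in>{..<length ps}. eval_stable orc (ps ! i) xs (vs ! i) N" "eval_stable orc g vs v N" for N
    using that eval_prog.eval_Comp[OF eval_Comp.hyps(1)] unfolding eval_stable_def by simp
  then show ?case by (rule eventually_elim2[OF args eval_Comp.IH(2)])
next
  case (eval_Rec0 g xs v h)
  have "eval_stable orc (Rec g h) (0 # xs) v N" if "eval_stable orc g xs v N" for N
    using that unfolding eval_stable_def by (blast intro: eval_prog.eval_Rec0)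
  then show ?case using eval_Rec0.IH by (rule eventually_mono[rotated])
next
  case (eval_RecSuc g h y xs r v)
  have "eval_stable orc (Rec g h) (Suc y # xs) v N"
    if "eval_stable orc (Rec g h) (y # xs) r N" "eval_stable orc h (y # r # xs) v N" for N
    using that unfolding eval_stable_def by (blast intro: eval_prog.eval_RecSuc)
  then show ?case by (rule eventually_elim2[OF eval_RecSuc.IH])
next
  case (eval_Min f y xs)
  have below: "\<forall>\<^sub>F N in sequentially. \<forall>z\<in>{..<y}. \<exists>v. v \<noteq> 0 \<and> eval_stable orc f (z # xs) v N"
  proof (intro eventually_ball_finite ballI)
    fix z assume "z \<in> {..<y}"
    then obtain v where "v \<noteq> 0" "\<forall>\<^sub>F N in sequentially. eval_stable orc f (z # xs) v N"
      using eval_Min.IH(2) by auto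
    then show "\<forall>\<^sub>F N in sequentially. \<exists>v. v \<noteq> 0 \<and> eval_stable orc f (z # xs) v N"
      by (auto elim: eventually_mono)
  qed simp
  have "eval_stable orc (Min f) xs y N"
    if "eval_stable orc f (y # xs) 0 N"
      and "\<forall>z\<in>{..<y}. \<exists>v. v \<noteq> 0 \<and> eval_stable orc f (z # xs) v N" for N
    using that unfolding eval_stable_def by (blast intro: eval_prog.eval_Min)
  then show ?case by (rule eventually_elim2[OF eval_Min.IH(1) below])
qed

section \<open>Turing reducibility\<close>

lemma turing_le_imp_eval_prog:
  assumes "x \<le>\<^sub>T y"
  shows "\<exists>p. \<forall>n. eval_prog (real_oracle y) p [n] (real_oracle x n)"
proof -
  from assms obtain f where f: "rec_in (real_oracle y) 1 f" "\<forall>n. f [n] = real_oracle x n"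
    unfolding turing_le_def turing_reducible_fun_def by blast
  from rec_in_imp_eval_prog[OF f(1)] obtain p
    where p: "\<forall>xs. length xs = 1 \<longrightarrow> eval_prog (real_oracle y) p xs (f xs)"
    by blast
  have "eval_prog (real_oracle y) p [n] (real_oracle x n)" for n
    using p[rule_format, of "[n]"] f(2) by simp
  then show ?thesis by blast
qed

lemma rec_in_relativize:
  assumes "rec_in B n f" and "rec_in C 1 h" and "\<And>m. h [m] = B m"
  shows "\<exists>f'. rec_in C n f' \<and> (\<forall>xs. length xs = n \<longrightarrow> f' xs = f xs)"
  using assms(1)
proof (induction rule: rec_in.induct)
  case (zero n)
  show ?case using rec_in.zero[of C n] by blast
next
  case succ
  show ?case using rec_in.succ[of C] by blast
next
  case (proj i n)
  show ?case using rec_in.proj[OF proj, of C] by blast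
next
  case oracle_call
  have "rec_in C 1 (\<lambda>xs. h (map (\<lambda>f. f xs) [\<lambda>xs. xs ! 0]))"
    by (rule rec_in.comp[OF assms(2)]) (auto intro: rec_in.proj)
  moreover have "\<forall>xs. length xs = 1 \<longrightarrow> h (map (\<lambda>f. f xs) [\<lambda>xs. xs ! 0]) = B (hd xs)"
    using assms(3) by (auto simp: length_Suc_conv)
  ultimately show ?case by blast
next
  case (comp m g fs n)
  from comp.IH obtain g' where g': "rec_in C m g'" "\<forall>xs. length xs = m \<longrightarrow> g' xs = g xs" by blast
  from comp.IH(2) have "\<forall>i. \<exists>f'. i < m \<longrightarrow> rec_in C n f' \<and> (\<forall>xs. length xs = n \<longrightarrow> f' xs = (fs ! i) xs)"
    by blast
  then obtain ff
    where ff: "\<And>i. i < m \<Longrightarrow> rec_in C n (ff i) \<and> (\<forall>xs. length xs = n \<longrightarrow> ff i xs = (fs ! i) xs)"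
    by metis
  have "rec_in C n (\<lambda>xs. g' (map (\<lambda>f. f xs) (map ff [0..<m])))"
    by (rule rec_in.comp[OF g'(1)]) (use ff in auto)
  moreover have "g' (map (\<lambda>f. f xs) (map ff [0..<m])) = g (map (\<lambda>f. f xs) fs)"
    if "length xs = n" for xs
  proof -
    have "map (\<lambda>f. f xs) (map ff [0..<m]) = map (\<lambda>f. f xs) fs"
      by (rule nth_equalityI) (use comp.hyps(2) ff that in auto)
    then show ?thesis using g'(2) comp.hyps(2) by simp
  qed
  ultimately show ?case by blast
next
  case (prim_rec n g h)
  from prim_rec.IH obtain g' h' where g': "rec_in C n g'" "\<forall>xs. length xs = n \<longrightarrow> g' xs = g xs"
    and h': "rec_in C (Suc (Suc n)) h'" "\<forall>xs. length xs = Suc (Suc n) \<longrightarrow> h' xs = h xs" by blast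
  have "prim_rec_op g' h' (y # xs) = prim_rec_op g h (y # xs)" if "length xs = n" for y xs
    by (induction y) (use g' h' that in auto)
  then have "\<forall>xs. length xs = Suc n \<longrightarrow> prim_rec_op g' h' xs = prim_rec_op g h xs"
    by (metis Suc_length_conv)
  then show ?case using rec_in.prim_rec[OF g'(1) h'(1)] by blast
next
  case (minimize n f)
  from minimize.IH obtain f' where f': "rec_in C (Suc n) f'" "\<forall>xs. length xs = Suc n \<longrightarrow> f' xs = f xs"
    by blast
  have "\<forall>xs. length xs = n \<longrightarrow> (\<exists>y. f' (y # xs) = 0)" using minimize.hyps(2) f'(2) by auto
  from rec_in.minimize[OF f'(1) this]
  have "rec_in C n (\<lambda>xs. LEAST y. f' (y # xs) = 0)" .
  moreover have "(LEAST y. f' (y # xs) = 0) = (LEAST y. f (y # xs) = 0)" if "length xs = n" for xs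
    using f'(2) that by simp
  ultimately show ?case by blast
qed

lemma turing_le_refl: "x \<le>\<^sub>T x"
  unfolding turing_le_def turing_reducible_fun_def
  using rec_in.oracle_call[of "real_oracle x"]
  by (intro exI[of _ "\<lambda>xs. real_oracle x (hd xs)"]) simp

lemma turing_le_trans: "x \<le>\<^sub>T y \<Longrightarrow> y \<le>\<^sub>T z \<Longrightarrow> x \<le>\<^sub>T z"
proof -
  assume "x \<le>\<^sub>T y" "y \<le>\<^sub>T z"
  then obtain f h where f: "rec_in (real_oracle y) 1 f" "\<forall>n. f [n] = real_oracle x n"
    and h: "rec_in (real_oracle z) 1 h" "\<forall>n. h [n] = real_oracle y n"
    unfolding turing_le_def turing_reducible_fun_def by blast
  from rec_in_relativize[OF f(1) h(1)] h(2) obtain f' where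
    "rec_in (real_oracle z) 1 f'" "\<forall>xs. length xs = 1 \<longrightarrow> f' xs = f xs"
    by blast
  then show ?thesis
    unfolding turing_le_def turing_reducible_fun_def using f(2) by force
qed

lemma turing_equiv_sym: "x \<equiv>\<^sub>T y \<Longrightarrow> y \<equiv>\<^sub>T x"
  unfolding turing_equiv_def by simp

lemma tdeg_eq_iff: "tdeg x = tdeg y \<longleftrightarrow> x \<equiv>\<^sub>T y"
proof
  assume "tdeg x = tdeg y"
  moreover have "x \<in> tdeg x" by (simp add: tdeg_def turing_equiv_def turing_le_refl)
  ultimately show "x \<equiv>\<^sub>T y" by (simp add: tdeg_def)
next
  assume "x \<equiv>\<^sub>T y"
  then show "tdeg x = tdeg y"
    unfolding tdeg_def turing_equiv_def by (blast intro: turing_le_trans)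
qed

lemma real_oracle_inj: "inj real_oracle"
proof (rule injI)
  fix x y assume eq: "real_oracle x = real_oracle y"
  have floor_eq: "real_of_int \<lfloor>x * 2 ^ n\<rfloor> = of_int \<lfloor>y * 2 ^ n\<rfloor>" for n
    using fun_cong[OF eq, of n] by (simp add: real_oracle_def int_encode_eq)
  have "\<bar>x * 2 ^ n - y * 2 ^ n\<bar> < 1" for n :: nat
    using floor_eq[of n] of_int_floor_le[of "x * 2 ^ n"] of_int_floor_le[of "y * 2 ^ n"]
      real_of_int_floor_add_one_gt[of "x * 2 ^ n"] real_of_int_floor_add_one_gt[of "y * 2 ^ n"]
    unfolding abs_less_iff by linarith
  then have "\<bar>x - y\<bar> * 2 ^ n < 1" for n :: nat
    by (simp add: abs_mult flip: left_diff_distrib)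
  show "x = y"
  proof (rule ccontr)
    assume "x \<noteq> y"
    then obtain n :: nat where "1 / \<bar>x - y\<bar> < 2 ^ n"
      using real_arch_pow[of 2 "1 / \<bar>x - y\<bar>"] by auto
    with \<open>x \<noteq> y\<close> \<open>\<bar>x - y\<bar> * 2 ^ n < 1\<close> show False by (simp add: divide_less_eq mult.commute)
  qed
qed

lemma countable_turing_below: "countable {y. y \<le>\<^sub>T x}"
proof -
  have "\<forall>y. \<exists>p. y \<le>\<^sub>T x \<longrightarrow> (\<forall>n. eval_prog (real_oracle x) p [n] (real_oracle y n))"
    using turing_le_imp_eval_prog by blast
  then obtain P where P: "\<And>y. y \<le>\<^sub>T x \<Longrightarrow> \<forall>n. eval_prog (real_oracle x) (P y) [n] (real_oracle y n)"
    by metis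
  have "inj_on P {y. y \<le>\<^sub>T x}"
  proof (rule inj_onI)
    fix y y' assume "y \<in> {y. y \<le>\<^sub>T x}" "y' \<in> {y. y \<le>\<^sub>T x}" "P y = P y'"
    then have "eval_prog (real_oracle x) (P y) [n] (real_oracle y n)"
      "eval_prog (real_oracle x) (P y) [n] (real_oracle y' n)" for n
      using P[of y] P[of y'] by simp_all
    then have "real_oracle y n = real_oracle y' n" for n by (rule eval_prog_det)
    then have "real_oracle y = real_oracle y'" ..
    then show "y = y'" by (rule injD[OF real_oracle_inj])
  qed
  then show ?thesis by (rule countableI')
qed

lemma countable_tdeg: "countable (tdeg x)"
  by (rule countable_subset[OF _ countable_turing_below[of x]])
    (auto simp: tdeg_def turing_equiv_def)

section \<open>Coding bit sequences by reals\<close>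

text \<open>The base-4 digits of \<open>cantor_real X\<close> are 1 and 2, so its binary expansion is
  unique and its first \<open>m\<close> binary digits are determined by the first \<open>m\<close> bits of \<open>X\<close>.\<close>

definition cantor_digit :: "(nat \<Rightarrow> bool) \<Rightarrow> nat \<Rightarrow> real" where
  "cantor_digit X i = (if X i then 2 else 1)"

definition cantor_tail :: "(nat \<Rightarrow> bool) \<Rightarrow> nat \<Rightarrow> real" where
  "cantor_tail X j = (\<Sum>n. cantor_digit X (n + j) / 4 ^ Suc n)"

definition cantor_real :: "(nat \<Rightarrow> bool) \<Rightarrow> real" where
  "cantor_real X = cantor_tail X 0"

fun cantor_prefix :: "(nat \<Rightarrow> bool) \<Rightarrow> nat \<Rightarrow> int" where
  "cantor_prefix X 0 = 0"
| "cantor_prefix X (Suc j) = 4 * cantor_prefix X j + (if X j then 2 else 1)"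

lemma cantor_tail_summable: "summable (\<lambda>n. cantor_digit X (n + j) / 4 ^ Suc n)"
  and cantor_tail_bounds: "0 \<le> cantor_tail X j" "cantor_tail X j < 1"
proof -
  have le: "cantor_digit X (n + j) / 4 ^ Suc n \<le> 1 / 2 * (1 / 4) ^ n" for n
    by (auto simp: cantor_digit_def power_divide field_simps)
  have geom: "(\<lambda>n. 1 / 2 * (1 / 4 :: real) ^ n) sums (2 / 3)"
    using sums_mult[OF geometric_sums[of "1 / 4 :: real"], of "1 / 2"] by simp
  show summable: "summable (\<lambda>n. cantor_digit X (n + j) / 4 ^ Suc n)"
    by (rule summable_comparison_test[OF _ sums_summable[OF geom]])
      (use le in \<open>auto simp: cantor_digit_def\<close>)
  show "0 \<le> cantor_tail X j"
    unfolding cantor_tail_def by (rule suminf_nonneg[OF summable]) (simp add: cantor_digit_def)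
  have "cantor_tail X j \<le> 2 / 3"
    unfolding cantor_tail_def using suminf_le[OF le summable sums_summable[OF geom]] geom
    by (simp add: sums_iff)
  then show "cantor_tail X j < 1" by simp
qed

lemma cantor_tail_Suc: "cantor_tail X j = cantor_digit X j / 4 + cantor_tail X (Suc j) / 4"
proof -
  have "cantor_tail X j = cantor_digit X j / 4 + (\<Sum>n. cantor_digit X (Suc n + j) / 4 ^ Suc (Suc n))"
    unfolding cantor_tail_def using suminf_split_head[OF cantor_tail_summable] by simp
  also have "(\<Sum>n. cantor_digit X (Suc n + j) / 4 ^ Suc (Suc n)) = cantor_tail X (Suc j) / 4"
    unfolding cantor_tail_def using suminf_divide[OF cantor_tail_summable, of X "Suc j" 4]
    by (simp add: field_simps)
  finally show ?thesis .
qed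

lemma cantor_real_times_power:
  "cantor_real X * 4 ^ j = of_int (cantor_prefix X j) + cantor_tail X j"
proof (induction j)
  case (Suc j)
  have "cantor_real X * 4 ^ Suc j = 4 * (of_int (cantor_prefix X j) + cantor_tail X j)"
    using Suc by simp
  also have "\<dots> = of_int (cantor_prefix X (Suc j)) + cantor_tail X (Suc j)"
    using cantor_tail_Suc[of X j] by (simp add: cantor_digit_def)
  finally show ?case .
qed (simp add: cantor_real_def)

lemma floor_of_int_add_divide:
  fixes t :: real
  assumes "K > 0" "0 \<le> t" "t < 1"
  shows "\<lfloor>(of_int N + t) / of_int K\<rfloor> = N div K"
proof -
  have "N = N div K * K + N mod K" "0 \<le> N mod K" "N mod K < K"
    using assms(1) by simp_all
  then have "N div K * K \<le> N" "N + 1 \<le> N div K * K + K" by linarith+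
  then have "real_of_int (N div K) * of_int K \<le> of_int N"
    "of_int N + 1 \<le> (of_int (N div K) + 1) * real_of_int K"
    by (simp_all add: distrib_right flip: of_int_mult of_int_add)
  with assms show ?thesis
    by (simp add: floor_eq_iff pos_le_divide_eq pos_divide_less_eq)
qed

lemma real_oracle_cantor_real:
  "real_oracle (cantor_real X) m = int_encode (cantor_prefix X m div 2 ^ m)"
proof -
  have "cantor_real X * 2 ^ m = (cantor_real X * 4 ^ m) / 2 ^ m"
    using power_mult_distrib[of "2 :: real" 2 m] by simp
  also have "\<dots> = (of_int (cantor_prefix X m) + cantor_tail X m) / of_int (2 ^ m)"
    by (simp add: cantor_real_times_power)
  finally show ?thesis
    using floor_of_int_add_divide[of "2 ^ m" "cantor_tail X m" "cantor_prefix X m"]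
      cantor_tail_bounds
    by (simp add: real_oracle_def)
qed

lemma cantor_prefix_cong: "(\<forall>i<j. X i = Y i) \<Longrightarrow> cantor_prefix X j = cantor_prefix Y j"
  by (induction j) auto

lemma real_oracle_cantor_real_cong:
  "(\<forall>i<m. X i = Y i) \<Longrightarrow> real_oracle (cantor_real X) m = real_oracle (cantor_real Y) m"
  using cantor_prefix_cong[of m X Y] by (simp add: real_oracle_cantor_real)

lemma real_oracle_cantor_real_neq:
  assumes "\<forall>i<j. X i = Y i" and "X j \<noteq> Y j"
  shows "real_oracle (cantor_real X) (2 * Suc j) \<noteq> real_oracle (cantor_real Y) (2 * Suc j)"
proof -
  have floor_eq: "\<lfloor>cantor_real Z * 2 ^ (2 * k)\<rfloor> = cantor_prefix Z k" for Z k
    using cantor_real_times_power[of Z k] cantor_tail_bounds[of Z k]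
    by (simp add: power_mult floor_eq_iff)
  have "cantor_prefix X (Suc j) \<noteq> cantor_prefix Y (Suc j)"
    using cantor_prefix_cong[OF assms(1)] assms(2) by auto
  then show ?thesis
    unfolding real_oracle_def floor_eq by (simp only: int_encode_eq not_False_eq_True)
qed

section \<open>Perfect sets of pairwise related sequences\<close>

definition extends :: "bool list \<Rightarrow> (nat \<Rightarrow> bool) \<Rightarrow> bool" where
  "extends \<sigma> X \<longleftrightarrow> (\<forall>i<length \<sigma>. X i = \<sigma> ! i)"

definition forces ::
    "(nat \<Rightarrow> (nat \<Rightarrow> bool) \<Rightarrow> (nat \<Rightarrow> bool) \<Rightarrow> bool) \<Rightarrow> nat \<Rightarrow> bool list \<Rightarrow> bool list \<Rightarrow> bool" where
  "forces R k \<sigma> \<tau> \<longleftrightarrow> (\<forall>X Y. extends \<sigma> X \<longrightarrow> extends \<tau> Y \<longrightarrow> R k X Y)"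

lemma extends_prefix: "prefix \<sigma> \<sigma>' \<Longrightarrow> extends \<sigma>' X \<Longrightarrow> extends \<sigma> X"
  unfolding extends_def prefix_def by (auto simp: nth_append)

lemma forces_mono: "forces R k \<sigma> \<tau> \<Longrightarrow> prefix \<sigma> \<sigma>' \<Longrightarrow> prefix \<tau> \<tau>' \<Longrightarrow> forces R k \<sigma>' \<tau>'"
  unfolding forces_def using extends_prefix by blast

lemma prefix_nth: "prefix xs ys \<Longrightarrow> i < length xs \<Longrightarrow> ys ! i = xs ! i"
  unfolding prefix_def by (auto simp: nth_append)

lemma extends_snoc: "extends (\<sigma> @ [b]) X \<longleftrightarrow> extends \<sigma> X \<and> X (length \<sigma>) = b"
  unfolding extends_def by (auto simp: nth_append less_Suc_eq)

lemma extends_map_upt: "extends (map Y [0..<L]) X \<longleftrightarrow> (\<forall>i<L. X i = Y i)"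
  unfolding extends_def by simp

lemma extends_imp_prefix_map_upt: "extends \<tau> Y \<Longrightarrow> length \<tau> \<le> L \<Longrightarrow> prefix \<tau> (map Y [0..<L])"
proof -
  assume "extends \<tau> Y" "length \<tau> \<le> L"
  then have "\<tau> = map Y [0..<length \<tau>]" unfolding extends_def by (intro nth_equalityI) auto
  moreover have "map Y [0..<L] = map Y [0..<length \<tau>] @ map Y [length \<tau>..<L]"
    using \<open>length \<tau> \<le> L\<close> by (metis map_append le_add_diff_inverse upt_add_eq_append zero_le)
  ultimately show ?thesis unfolding prefix_def by metis
qed

text \<open>A fusion argument in the style of Mycielski's theorem.\<close>

locale splitting =
  fixes R :: "nat \<Rightarrow> (nat \<Rightarrow> bool) \<Rightarrow> (nat \<Rightarrow> bool) \<Rightarrow> bool"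
  assumes splitting: "\<And>k \<sigma> \<tau>. \<exists>\<sigma>' \<tau>'. prefix \<sigma> \<sigma>' \<and> prefix \<tau> \<tau>' \<and> forces R k \<sigma>' \<tau>'"
begin

definition refine ::
    "nat \<times> bool list \<times> bool list \<Rightarrow> (bool list \<Rightarrow> bool list) \<Rightarrow> bool list \<Rightarrow> bool list" where
  "refine = (\<lambda>(k, \<sigma>, \<tau>) T.
     let p = SOME p. prefix (T \<sigma>) (fst p) \<and> prefix (T \<tau>) (snd p) \<and> forces R k (fst p) (snd p)
     in T(\<sigma> := fst p, \<tau> := snd p))"

lemma refine_prefix_forces:
  assumes "\<sigma> \<noteq> \<tau>"
  shows "prefix (T \<rho>) (refine (k, \<sigma>, \<tau>) T \<rho>)"
    and "forces R k (refine (k, \<sigma>, \<tau>) T \<sigma>) (refine (k, \<sigma>, \<tau>) T \<tau>)"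
proof -
  define p
    where "p = (SOME p. prefix (T \<sigma>) (fst p) \<and> prefix (T \<tau>) (snd p) \<and> forces R k (fst p) (snd p))"
  have "\<exists>p. prefix (T \<sigma>) (fst p) \<and> prefix (T \<tau>) (snd p) \<and> forces R k (fst p) (snd p)"
    using splitting[of "T \<sigma>" "T \<tau>" k] by auto
  then have "prefix (T \<sigma>) (fst p) \<and> prefix (T \<tau>) (snd p) \<and> forces R k (fst p) (snd p)"
    unfolding p_def by (rule someI_ex)
  moreover have "refine (k, \<sigma>, \<tau>) T = T(\<sigma> := fst p, \<tau> := snd p)"
    unfolding refine_def p_def by (simp add: Let_def)
  ultimately show "prefix (T \<rho>) (refine (k, \<sigma>, \<tau>) T \<rho>)"
    and "forces R k (refine (k, \<sigma>, \<tau>) T \<sigma>) (refine (k, \<sigma>, \<tau>) T \<tau>)"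
    using assms by auto
qed

lemma fold_refine_prefix:
  assumes "\<forall>(k, \<sigma>, \<tau>)\<in>set L. \<sigma> \<noteq> \<tau>"
  shows "prefix (T \<rho>) (fold refine L T \<rho>)"
  using assms
proof (induction L arbitrary: T)
  case (Cons a L)
  obtain k \<sigma> \<tau> where "a = (k, \<sigma>, \<tau>)" by (cases a)
  then have "prefix (T \<rho>) (refine a T \<rho>)" using Cons.prems refine_prefix_forces(1) by auto
  then show ?case using Cons.IH[of "refine a T"] Cons.prems by (auto intro: prefix_order.trans)
qed simp

lemma fold_refine_forces:
  assumes "\<forall>(k, \<sigma>, \<tau>)\<in>set L. \<sigma> \<noteq> \<tau>" and "(k, \<sigma>, \<tau>) \<in> set L"
  shows "forces R k (fold refine L T \<sigma>) (fold refine L T \<tau>)"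
  using assms
proof (induction L arbitrary: T)
  case (Cons a L)
  show ?case
  proof (cases "(k, \<sigma>, \<tau>) \<in> set L")
    case True
    then show ?thesis using Cons.IH[of "refine a T"] Cons.prems by simp
  next
    case False
    then have "a = (k, \<sigma>, \<tau>)" using Cons.prems by simp
    then have "forces R k (refine a T \<sigma>) (refine a T \<tau>)"
      using Cons.prems refine_prefix_forces(2) by auto
    then show ?thesis
      using fold_refine_prefix[of L "refine a T"] Cons.prems by (auto intro: forces_mono)
  qed
qed simp

definition stage_requirements :: "nat \<Rightarrow> (nat \<times> bool list \<times> bool list) list" where
  "stage_requirements s = filter (\<lambda>(k, \<sigma>, \<tau>). \<sigma> \<noteq> \<tau>)
     (List.product [0..<Suc s]
       (List.product (List.n_lists (Suc s) [True, False]) (List.n_lists (Suc s) [True, False])))"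

lemma set_stage_requirements:
  "(k, \<sigma>, \<tau>) \<in> set (stage_requirements s) \<longleftrightarrow>
     k \<le> s \<and> length \<sigma> = Suc s \<and> length \<tau> = Suc s \<and> \<sigma> \<noteq> \<tau>"
proof -
  have "set (List.n_lists (Suc s) [True, False]) = {xs. length xs = Suc s}"
    by (simp only: set_n_lists) auto
  then show ?thesis unfolding stage_requirements_def by (simp only: set_filter set_product) auto
qed

lemma stage_requirements_distinct: "\<forall>(k, \<sigma>, \<tau>)\<in>set (stage_requirements s). \<sigma> \<noteq> \<tau>"
  using set_stage_requirements by auto

text \<open>\<open>approx s \<rho>\<close> is the node of the tree at stage \<open>s\<close> labelled by a string \<open>\<rho>\<close> of
  length \<open>s\<close>.\<close>

fun approx :: "nat \<Rightarrow> bool list \<Rightarrow> bool list" where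
  "approx 0 = (\<lambda>\<rho>. [])"
| "approx (Suc s) = fold refine (stage_requirements s) (\<lambda>\<rho>. approx s (butlast \<rho>) @ [last \<rho>])"

lemma approx_Suc_prefix: "prefix (approx s (butlast \<rho>) @ [last \<rho>]) (approx (Suc s) \<rho>)"
  using fold_refine_prefix[OF stage_requirements_distinct] by simp

lemma approx_Suc_forces:
  "(k, \<sigma>, \<tau>) \<in> set (stage_requirements s) \<Longrightarrow> forces R k (approx (Suc s) \<sigma>) (approx (Suc s) \<tau>)"
  using fold_refine_forces[OF stage_requirements_distinct] by simp

lemma length_approx: "s \<le> length (approx s \<rho>)"
proof (induction s arbitrary: \<rho>)
  case (Suc s)
  show ?case
    using Suc[of "butlast \<rho>"] prefix_length_le[OF approx_Suc_prefix[of s \<rho>]] by simp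
qed simp

lemma approx_chain: "s \<le> s' \<Longrightarrow> prefix (approx s (map b [0..<s])) (approx s' (map b [0..<s']))"
proof (induction s' rule: dec_induct)
  case (step n)
  have "prefix (approx n (map b [0..<n])) (approx n (map b [0..<n]) @ [b n])" by simp
  also have "prefix \<dots> (approx (Suc n) (map b [0..<Suc n]))"
    using approx_Suc_prefix[of n "map b [0..<Suc n]"] by simp
  finally have "prefix (approx n (map b [0..<n])) (approx (Suc n) (map b [0..<Suc n]))" .
  then show ?case using step.IH by (rule prefix_order.trans[rotated])
qed simp

definition branch :: "(nat \<Rightarrow> bool) \<Rightarrow> nat \<Rightarrow> bool" where
  "branch b n = approx (Suc n) (map b [0..<Suc n]) ! n"

lemma extends_approx_branch: "extends (approx s (map b [0..<s])) (branch b)"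
  unfolding extends_def
proof (intro allI impI)
  fix i assume i: "i < length (approx s (map b [0..<s]))"
  let ?m = "max s (Suc i)"
  have "approx ?m (map b [0..<?m]) ! i = approx s (map b [0..<s]) ! i"
    by (rule prefix_nth[OF approx_chain i]) simp
  moreover have "approx ?m (map b [0..<?m]) ! i = approx (Suc i) (map b [0..<Suc i]) ! i"
    by (rule prefix_nth[OF approx_chain])
      (use length_approx[of "Suc i"] in \<open>simp_all add: Suc_le_eq\<close>)
  ultimately show "branch b i = approx s (map b [0..<s]) ! i" unfolding branch_def by simp
qed

lemma branch_related:
  assumes "b \<noteq> b'"
  shows "R k (branch b) (branch b')"
proof -
  obtain d where d: "b d \<noteq> b' d" using assms by auto
  define s where "s = max k d"
  have "map b [0..<Suc s] \<noteq> map b' [0..<Suc s]"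
    using d map_eq_conv[of b "[0..<Suc s]" b'] unfolding s_def by (auto simp del: upt_Suc)
  then have "(k, map b [0..<Suc s], map b' [0..<Suc s]) \<in> set (stage_requirements s)"
    unfolding set_stage_requirements by (simp add: s_def)
  then have "forces R k (approx (Suc s) (map b [0..<Suc s])) (approx (Suc s) (map b' [0..<Suc s]))"
    by (rule approx_Suc_forces)
  then show ?thesis unfolding forces_def using extends_approx_branch by blast
qed

end

section \<open>A perfect antichain of Turing degrees\<close>

definition not_reduced_by :: "nat \<Rightarrow> (nat \<Rightarrow> bool) \<Rightarrow> (nat \<Rightarrow> bool) \<Rightarrow> bool" where
  "not_reduced_by k X Y \<longleftrightarrow>
     \<not> (\<forall>n. eval_prog (real_oracle (cantor_real Y)) (from_nat k) [n]
            (real_oracle (cantor_real X) n))"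

lemma real_oracle_cantor_real_snoc_neq:
  assumes "extends (\<sigma> @ [True]) X" "extends (\<sigma> @ [False]) X'"
  shows "real_oracle (cantor_real X) (2 * Suc (length \<sigma>)) \<noteq>
    real_oracle (cantor_real X') (2 * Suc (length \<sigma>))"
proof (rule real_oracle_cantor_real_neq)
  from assms have "extends \<sigma> X" "extends \<sigma> X'" "X (length \<sigma>)" "\<not> X' (length \<sigma>)"
    unfolding extends_snoc by simp_all
  then show "\<forall>i<length \<sigma>. X i = X' i" "X (length \<sigma>) \<noteq> X' (length \<sigma>)"
    unfolding extends_def by simp_all
qed

lemma forces_not_reduced_by_snoc:
  assumes pinned: "\<And>X Y. extends \<tau> Y \<Longrightarrow> \<not> not_reduced_by k X Y \<Longrightarrow>
    real_oracle (cantor_real X) (2 * Suc (length \<sigma>)) = v"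
  shows "\<exists>b. forces not_reduced_by k (\<sigma> @ [b]) \<tau>"
proof -
  let ?n = "2 * Suc (length \<sigma>)"
  define b where "b \<longleftrightarrow> \<not> (\<exists>X. extends (\<sigma> @ [True]) X \<and> real_oracle (cantor_real X) ?n = v)"
  have "not_reduced_by k X Y" if X: "extends (\<sigma> @ [b]) X" and Y: "extends \<tau> Y" for X Y
  proof (rule ccontr)
    assume "\<not> not_reduced_by k X Y"
    with Y have Xv: "real_oracle (cantor_real X) ?n = v" by (rule pinned)
    show False
    proof (cases b)
      case True
      with X have "extends (\<sigma> @ [True]) X" by simp
      with True Xv show False unfolding b_def by blast
    next
      case False
      then obtain X0 where "extends (\<sigma> @ [True]) X0" "real_oracle (cantor_real X0) ?n = v"
        unfolding b_def by blast
      moreover from X False have "extends (\<sigma> @ [False]) X" by simp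
      ultimately show False using real_oracle_cantor_real_snoc_neq Xv by metis
    qed
  qed
  then show ?thesis unfolding forces_def by blast
qed

text \<open>Either no extension of \<open>\<tau>\<close> makes program \<open>k\<close> halt on the argument \<open>n\<close>, or by the use
  principle a finite extension \<open>\<tau>'\<close> of \<open>\<tau>\<close> fixes its output \<open>v\<close>; one more bit of \<open>\<sigma>\<close> then
  makes the \<open>n\<close>-th value of the reduced real differ from \<open>v\<close>.\<close>

lemma splitting_not_reduced_by: "splitting not_reduced_by"
proof
  fix k and \<sigma> \<tau> :: "bool list"
  define p where "p = (from_nat k :: prog)"
  define n where "n = 2 * Suc (length \<sigma>)"
  show "\<exists>\<sigma>' \<tau>'. prefix \<sigma> \<sigma>' \<and> prefix \<tau> \<tau>' \<and> forces not_reduced_by k \<sigma>' \<tau>'"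
  proof (cases "\<exists>Y v. extends \<tau> Y \<and> eval_prog (real_oracle (cantor_real Y)) p [n] v")
    case False
    then have "forces not_reduced_by k \<sigma> \<tau>"
      unfolding forces_def not_reduced_by_def p_def by blast
    then show ?thesis by blast
  next
    case True
    then obtain Y v where Y: "extends \<tau> Y"
      and v: "eval_prog (real_oracle (cantor_real Y)) p [n] v"
      by blast
    obtain N where N: "eval_stable (real_oracle (cantor_real Y)) p [n] v N"
      using eval_prog_eventually_stable[OF v] by (auto simp: eventually_sequentially)
    define \<tau>' where "\<tau>' = map Y [0..<max N (length \<tau>)]"
    have "eval_prog (real_oracle (cantor_real Y')) p [n] v" if "extends \<tau>' Y'" for Y'
    proof -
      have "\<forall>u<N. real_oracle (cantor_real Y') u = real_oracle (cantor_real Y) u"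
        using that real_oracle_cantor_real_cong unfolding \<tau>'_def extends_map_upt by simp
      then show ?thesis using N unfolding eval_stable_def by blast
    qed
    then have "real_oracle (cantor_real X) n = v"
      if "extends \<tau>' Y'" "\<not> not_reduced_by k X Y'" for X Y'
      using that eval_prog_det unfolding not_reduced_by_def p_def by blast
    then have "\<exists>b. forces not_reduced_by k (\<sigma> @ [b]) \<tau>'"
      unfolding n_def by (rule forces_not_reduced_by_snoc)
    then obtain b where "forces not_reduced_by k (\<sigma> @ [b]) \<tau>'" ..
    moreover have "prefix \<tau> \<tau>'"
      unfolding \<tau>'_def by (rule extends_imp_prefix_map_upt[OF Y]) simp
    ultimately show ?thesis by (intro exI[of _ "\<sigma> @ [b]"] exI[of _ \<tau>']) simp
  qed
qed

lemma perfect_turing_antichain: "\<exists>G :: nat set \<Rightarrow> real. \<forall>A B. A \<noteq> B \<longrightarrow> \<not> G A \<le>\<^sub>T G B"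
proof -
  interpret splitting not_reduced_by by (rule splitting_not_reduced_by)
  have "\<not> cantor_real (branch b) \<le>\<^sub>T cantor_real (branch b')" if "b \<noteq> b'" for b b'
  proof
    assume "cantor_real (branch b) \<le>\<^sub>T cantor_real (branch b')"
    then obtain p where "\<forall>n. eval_prog (real_oracle (cantor_real (branch b'))) p [n]
        (real_oracle (cantor_real (branch b)) n)"
      using turing_le_imp_eval_prog by blast
    moreover have "not_reduced_by (to_nat p) (branch b) (branch b')"
      using branch_related[OF that] .
    ultimately show False unfolding not_reduced_by_def by simp
  qed
  moreover have "(\<lambda>n. n \<in> A) \<noteq> (\<lambda>n. n \<in> B)" if "A \<noteq> B" for A B :: "nat set"
    using that by (metis Collect_mem_eq)
  ultimately have "\<forall>A B. A \<noteq> B \<longrightarrow>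
      \<not> cantor_real (branch (\<lambda>n. n \<in> A)) \<le>\<^sub>T cantor_real (branch (\<lambda>n. n \<in> B))"
    by blast
  then show ?thesis by (intro exI[of _ "\<lambda>A. cantor_real (branch (\<lambda>n. n \<in> A))"])
qed

section \<open>Sets of size less than the continuum\<close>

definition small :: "'a set \<Rightarrow> bool" where
  "small A \<longleftrightarrow> |A| <o |UNIV :: real set|"

lemma countable_imp_small: "countable A \<Longrightarrow> small A"
proof -
  assume "countable A"
  moreover have "\<not> |UNIV :: real set| \<le>o |UNIV :: nat set|"
    using uncountable_UNIV_real countable_card_of_nat by blast
  ultimately show ?thesis
    unfolding small_def countable_card_of_nat
    by (meson card_of_Well_order not_ordLeq_iff_ordLess ordLeq_ordLess_trans)
qed

lemma small_subset: "A \<subseteq> B \<Longrightarrow> small B \<Longrightarrow> small A"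
  unfolding small_def by (rule ordLeq_ordLess_trans[OF card_of_mono1])

lemma small_image: "small A \<Longrightarrow> small (f ` A)"
  unfolding small_def by (rule ordLeq_ordLess_trans[OF card_of_image])

lemma small_eqpoll: "A \<approx> B \<Longrightarrow> small B \<Longrightarrow> small A"
  unfolding small_def eqpoll_iff_card_of_ordIso by (rule ordIso_ordLess_trans)

lemma not_small_UNIV_real: "\<not> small (UNIV :: real set)"
  unfolding small_def by (rule ordLess_irreflexive)

lemma small_Un: "small A \<Longrightarrow> small B \<Longrightarrow> small (A \<union> B)"
  unfolding small_def by (rule card_of_Un_ordLess_infinite[OF infinite_UNIV_char_0])

lemma small_UN:
  assumes "small A" and "\<And>a. a \<in> A \<Longrightarrow> countable (B a)"
  shows "small (\<Union>a\<in>A. B a)"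
proof (cases "finite A")
  case True
  then show ?thesis
    using assms(2) by (intro countable_imp_small countable_UN) (auto intro: countable_finite)
next
  case False
  have "|B a| \<le>o |A|" if "a \<in> A" for a
    using assms(2)[OF that] False
    unfolding countable_card_of_nat infinite_iff_card_of_nat by (rule ordLeq_transitive)
  then have "|\<Union>a\<in>A. B a| \<le>o |A|"
    by (intro card_of_UNION_ordLeq_infinite[OF False ordLeq_refl[OF card_of_Card_order]]) blast
  then show ?thesis using assms(1) unfolding small_def by (rule ordLeq_ordLess_trans)
qed

lemma small_Times:
  assumes "small A"
  shows "small (A \<times> A)"
proof (cases "finite A")
  case True
  then show ?thesis by (intro countable_imp_small countable_finite) simp
next
  case False
  from False assms show ?thesis
    unfolding small_def by (rule ordIso_ordLess_trans[OF card_of_Times_same_infinite])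
qed

section \<open>Planar sets without increasing pairs\<close>

definition no_increasing_pair :: "(real \<times> real) set \<Rightarrow> bool" where
  "no_increasing_pair A \<longleftrightarrow> \<not> (\<exists>x y x' y'. (x, y) \<in> A \<and> (x', y') \<in> A \<and> x < x' \<and> y < y')"

definition mirror :: "(real \<times> real) set \<Rightarrow> (real \<times> real) set" where
  "mirror A = (\<lambda>(x, y). (x, - y)) ` A"

lemma mem_mirror_iff: "(x, y) \<in> mirror A \<longleftrightarrow> (x, - y) \<in> A"
proof
  assume "(x, - y) \<in> A"
  then show "(x, y) \<in> mirror A" unfolding mirror_def by (rule rev_image_eqI) simp
qed (auto simp: mirror_def)

lemma no_increasing_pair_mirror_iff:
  "no_increasing_pair (mirror A) \<longleftrightarrow> \<not> (\<exists>x y x' y'. (x, y) \<in> A \<and> (x', y') \<in> A \<and> x < x' \<and> y > y')"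
  unfolding no_increasing_pair_def mem_mirror_iff
proof (intro arg_cong[where f = Not] iffI; elim exE conjE)
  fix x y x' y' assume "(x, - y) \<in> A" "(x', - y') \<in> A" "x < x'" "y < y'"
  then show "\<exists>x y x' y'. (x, y) \<in> A \<and> (x', y') \<in> A \<and> x < x' \<and> y > y'" by force
next
  fix x y x' y' assume "(x, y) \<in> A" "(x', y') \<in> A" "x < x'" "y > y'"
  then show "\<exists>x y x' y'. (x, - y) \<in> A \<and> (x', - y') \<in> A \<and> x < x' \<and> y < y'"
    by (intro exI[of _ x] exI[of _ "- y"] exI[of _ x'] exI[of _ "- y'"]) simp
qed

text \<open>If \<open>W\<close> is a down-set of rational points, \<open>staircase W\<close> is its boundary.\<close>

definition staircase :: "(real \<times> real) set \<Rightarrow> (real \<times> real) set" where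
  "staircase W = {(x, y). (\<forall>q\<in>\<rat>. \<forall>r\<in>\<rat>. q < x \<longrightarrow> r < y \<longrightarrow> (q, r) \<in> W) \<and>
                         (\<forall>q\<in>\<rat>. \<forall>r\<in>\<rat>. x < q \<longrightarrow> y < r \<longrightarrow> (q, r) \<notin> W)}"

definition rat_downset :: "(real \<times> real) set \<Rightarrow> (real \<times> real) set" where
  "rat_downset D = {(q, r). q \<in> \<rat> \<and> r \<in> \<rat> \<and> (\<exists>(a, b)\<in>D. q \<le> a \<and> r \<le> b)}"

definition one_to_one_part :: "(real \<times> real) set \<Rightarrow> (real \<times> real) set" where
  "one_to_one_part A =
     {(x, y). (x, y) \<in> A \<and> (\<forall>x'. (x', y) \<in> A \<longrightarrow> x' = x) \<and> (\<forall>y'. (x, y') \<in> A \<longrightarrow> y' = y)}"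

lemma no_increasing_pair_staircase: "no_increasing_pair (staircase W)"
  unfolding no_increasing_pair_def
proof clarify
  fix x y x' y' assume xy: "(x, y) \<in> staircase W" and xy': "(x', y') \<in> staircase W"
    and "x < x'" "y < y'"
  then obtain q r where q: "q \<in> \<rat>" "x < q" "q < x'" and r: "r \<in> \<rat>" "y < r" "r < y'"
    using Rats_dense_in_real by metis
  have "(q, r) \<in> W" using xy' q r unfolding staircase_def by blast
  moreover have "(q, r) \<notin> W" using xy q r unfolding staircase_def by blast
  ultimately show False by contradiction
qed

lemma rat_downset_subset: "rat_downset D \<subseteq> \<rat> \<times> \<rat>"
  unfolding rat_downset_def by auto

lemma subset_staircase_rat_downset:
  assumes "no_increasing_pair D"
  shows "D \<subseteq> staircase (rat_downset D)"
proof clarify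
  fix x y assume xy: "(x, y) \<in> D"
  have "(q, r) \<notin> rat_downset D" if "x < q" "y < r" for q r
  proof
    assume "(q, r) \<in> rat_downset D"
    then obtain a b where ab: "(a, b) \<in> D" "q \<le> a" "r \<le> b" unfolding rat_downset_def by blast
    with that have "x < a" "y < b" by linarith+
    with xy ab(1) assms show False unfolding no_increasing_pair_def by blast
  qed
  moreover have "(q, r) \<in> rat_downset D" if "q \<in> \<rat>" "r \<in> \<rat>" "q < x" "r < y" for q r
    using xy that unfolding rat_downset_def by (auto intro!: bexI[of _ "(x, y)"])
  ultimately show "(x, y) \<in> staircase (rat_downset D)"
    unfolding staircase_def by blast
qed

text \<open>The rows with two points of a set without increasing pairs span pairwise disjoint open
  intervals, each containing a rational.\<close>

lemma countable_rows_with_two_points: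
  assumes "no_increasing_pair A"
  shows "countable {y. \<exists>x x'. x < x' \<and> (x, y) \<in> A \<and> (x', y) \<in> A}" (is "countable ?E")
proof -
  have "\<forall>y\<in>?E. \<exists>q. q \<in> \<rat> \<and> (\<exists>x x'. x < q \<and> q < x' \<and> (x, y) \<in> A \<and> (x', y) \<in> A)"
    using Rats_dense_in_real by blast
  from bchoice[OF this] obtain Q
    where Q: "\<forall>y\<in>?E. Q y \<in> \<rat> \<and> (\<exists>x x'. x < Q y \<and> Q y < x' \<and> (x, y) \<in> A \<and> (x', y) \<in> A)"
    by blast
  have less: False if y1: "y1 \<in> ?E" and y2: "y2 \<in> ?E" and "Q y1 = Q y2" "y1 < y2" for y1 y2
  proof -
    obtain x1 where x1: "x1 < Q y1" "(x1, y1) \<in> A" using Q[rule_format, OF y1] by blast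
    obtain x2 where x2: "Q y2 < x2" "(x2, y2) \<in> A" using Q[rule_format, OF y2] by blast
    have "x1 < x2" using x1(1) x2(1) \<open>Q y1 = Q y2\<close> by simp
    then show False using assms x1(2) x2(2) \<open>y1 < y2\<close> unfolding no_increasing_pair_def by blast
  qed
  have "inj_on Q ?E"
  proof (rule inj_onI, rule ccontr)
    fix y1 y2 assume y12: "y1 \<in> ?E" "y2 \<in> ?E" "Q y1 = Q y2" and "y1 \<noteq> y2"
    then consider "y1 < y2" | "y2 < y1" by linarith
    then show False
      by cases (use less[OF y12] less[OF y12(2,1) y12(3)[symmetric]] in blast)+
  qed
  moreover have "countable (Q ` ?E)"
    by (rule countable_subset[OF _ countable_rat]) (use Q in blast)
  ultimately show ?thesis by (rule countable_image_inj_on[rotated])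
qed

lemma countable_columns_with_two_points:
  assumes "no_increasing_pair A"
  shows "countable {x. \<exists>y y'. y < y' \<and> (x, y) \<in> A \<and> (x, y') \<in> A}"
proof -
  have "no_increasing_pair (prod.swap ` A)"
    using assms unfolding no_increasing_pair_def by auto
  from countable_rows_with_two_points[OF this] show ?thesis
    by (rule countable_subset[rotated]) auto
qed

lemma countable_diff_one_to_one_part:
  assumes "D \<subseteq> A" "no_increasing_pair A" "inj_on fst D" "inj_on snd D"
  shows "countable (D - one_to_one_part A)"
proof -
  let ?Y = "{y. \<exists>x x'. x < x' \<and> (x, y) \<in> A \<and> (x', y) \<in> A}"
  let ?X = "{x. \<exists>y y'. y < y' \<and> (x, y) \<in> A \<and> (x, y') \<in> A}"
  have "D - one_to_one_part A \<subseteq> {p\<in>D. snd p \<in> ?Y} \<union> {p\<in>D. fst p \<in> ?X}"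
  proof
    fix p assume "p \<in> D - one_to_one_part A"
    then obtain x y where p: "p = (x, y)" and xyD: "(x, y) \<in> D"
      and not_one_to_one: "(x, y) \<notin> one_to_one_part A"
      by (cases p) auto
    have xy: "(x, y) \<in> A" using xyD assms(1) by blast
    have "y \<in> ?Y" if "(x', y) \<in> A" "x' \<noteq> x" for x'
    proof -
      from that(2) consider "x' < x" | "x < x'" by linarith
      then show ?thesis using xy that(1) by cases blast+
    qed
    moreover have "x \<in> ?X" if "(x, y') \<in> A" "y' \<noteq> y" for y'
    proof -
      from that(2) consider "y' < y" | "y < y'" by linarith
      then show ?thesis using xy that(1) by cases blast+
    qed
    ultimately have "y \<in> ?Y \<or> x \<in> ?X"
      using xy not_one_to_one unfolding one_to_one_part_def by blast
    with xyD show "p \<in> {p\<in>D. snd p \<in> ?Y} \<union> {p\<in>D. fst p \<in> ?X}" unfolding p by auto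
  qed
  moreover have "countable {p\<in>D. snd p \<in> ?Y}"
    by (rule countable_image_inj_on[OF
          countable_subset[OF _ countable_rows_with_two_points[OF assms(2)]]
          inj_on_subset[OF assms(4)]]) auto
  moreover have "countable {p\<in>D. fst p \<in> ?X}"
    by (rule countable_image_inj_on[OF
          countable_subset[OF _ countable_columns_with_two_points[OF assms(2)]]
          inj_on_subset[OF assms(3)]]) auto
  ultimately show ?thesis by (meson countable_Un countable_subset)
qed

lemma no_increasing_pair_cover:
  assumes "no_increasing_pair D" "inj_on fst D" "inj_on snd D"
  shows "\<exists>W \<subseteq> \<rat> \<times> \<rat>. countable (D - one_to_one_part (staircase W))"
  using countable_diff_one_to_one_part[OF subset_staircase_rat_downset no_increasing_pair_staircase]
    assms rat_downset_subset by blast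

lemma one_to_one_part_row: "(x, y) \<in> one_to_one_part A \<Longrightarrow> {x'. (x', y) \<in> one_to_one_part A} = {x}"
  unfolding one_to_one_part_def by blast

lemma one_to_one_part_column: "(x, y) \<in> one_to_one_part A \<Longrightarrow> {y'. (x, y') \<in> one_to_one_part A} = {y}"
  unfolding one_to_one_part_def by blast

lemma countable_row_one_to_one_part: "countable {x. (x, y) \<in> one_to_one_part A}"
  by (cases "\<exists>x. (x, y) \<in> one_to_one_part A") (auto simp: one_to_one_part_row)

lemma countable_column_one_to_one_part: "countable {y. (x, y) \<in> one_to_one_part A}"
  by (cases "\<exists>y. (x, y) \<in> one_to_one_part A") (auto simp: one_to_one_part_column)

definition rat_pairs :: "nat set \<Rightarrow> (real \<times> real) set" where
  "rat_pairs c = from_nat_into (\<rat> \<times> \<rat>) ` c"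

lemma rat_pairs_surj: "W \<subseteq> \<rat> \<times> \<rat> \<Longrightarrow> \<exists>c. rat_pairs c = W"
proof
  assume "W \<subseteq> \<rat> \<times> \<rat>"
  moreover have "range (from_nat_into (\<rat> \<times> \<rat>)) = (\<rat> \<times> \<rat> :: (real \<times> real) set)"
    by (rule range_from_nat_into) (auto intro: countable_SIGMA countable_rat)
  moreover have "from_nat_into (\<rat> \<times> \<rat>) ` {n. from_nat_into (\<rat> \<times> \<rat>) n \<in> W} =
      W \<inter> range (from_nat_into (\<rat> \<times> \<rat>))"
    by auto
  ultimately show "rat_pairs {n. from_nat_into (\<rat> \<times> \<rat>) n \<in> W} = W"
    unfolding rat_pairs_def by auto
qed

text \<open>The union of the graph of a decreasing and of an increasing partial injection.\<close>

definition monotone_curves :: "nat set \<Rightarrow> (real \<times> real) set" where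
  "monotone_curves c =
     one_to_one_part (staircase (rat_pairs c)) \<union> mirror (one_to_one_part (staircase (rat_pairs c)))"

lemma countable_row_monotone_curves: "countable {x. (x, y) \<in> monotone_curves c}"
  unfolding monotone_curves_def mem_mirror_iff Un_iff Collect_disj_eq
  using countable_row_one_to_one_part by blast

lemma countable_column_monotone_curves: "countable {y. (x, y) \<in> monotone_curves c}"
proof -
  have "{y. (x, y) \<in> monotone_curves c} =
      {y. (x, y) \<in> one_to_one_part (staircase (rat_pairs c))} \<union>
      uminus ` {y. (x, y) \<in> one_to_one_part (staircase (rat_pairs c))}"
    unfolding monotone_curves_def by (auto simp: mem_mirror_iff image_iff) (metis minus_minus)
  then show ?thesis using countable_column_one_to_one_part by simp
qed

lemma monotone_curves_cover:
  assumes "inj_on fst D" "inj_on snd D" "no_increasing_pair D \<or> no_increasing_pair (mirror D)"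
  shows "\<exists>c. countable (D - monotone_curves c)"
  using assms(3)
proof
  assume "no_increasing_pair D"
  then obtain c where "countable (D - one_to_one_part (staircase (rat_pairs c)))"
    using no_increasing_pair_cover[OF _ assms(1,2)] rat_pairs_surj by metis
  then show ?thesis
    by (metis Diff_mono countable_subset monotone_curves_def order_refl sup_ge1)
next
  assume "no_increasing_pair (mirror D)"
  moreover have "inj_on fst (mirror D)" "inj_on snd (mirror D)"
    unfolding mirror_def using assms(1,2)
    by (auto intro!: inj_on_imageI simp: inj_on_def split_def)
  ultimately obtain c where "countable (mirror D - one_to_one_part (staircase (rat_pairs c)))"
    using no_increasing_pair_cover rat_pairs_surj by metis
  then have "countable (mirror (mirror D - one_to_one_part (staircase (rat_pairs c))))"
    unfolding mirror_def by simp
  moreover have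
    "D - monotone_curves c \<subseteq> mirror (mirror D - one_to_one_part (staircase (rat_pairs c)))"
    unfolding monotone_curves_def by (auto simp: mem_mirror_iff)
  ultimately have "countable (D - monotone_curves c)" by (rule countable_subset[rotated])
  then show ?thesis ..
qed

section \<open>Transfinite construction of the antichain\<close>

lemma wellorder_avoiding_choice:
  assumes "Well_order r"
    and cong: "\<And>h h' a. (\<forall>b\<in>underS r a. h b = h' b) \<Longrightarrow> F h a = F h' a"
    and avoidable: "\<And>h a. \<exists>x\<in>P. x \<notin> F h a"
  shows "\<exists>g. \<forall>a. g a \<in> P \<and> g a \<notin> F g a"
proof -
  have wf: "wf (r - Id)" using assms(1) by (simp add: wo_rel.WF wo_rel_def)
  define g where "g = wfrec (r - Id) (\<lambda>h a. SOME x. x \<in> P \<and> x \<notin> F h a)"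
  have "g a \<in> P \<and> g a \<notin> F g a" for a
  proof -
    have "\<forall>b\<in>underS r a. cut g (r - Id) a b = g b"
      unfolding underS_def cut_def by auto
    then have "F (cut g (r - Id) a) a = F g a" by (rule cong)
    then show ?thesis
      using wfrec[OF wf, of "\<lambda>h a. SOME x. x \<in> P \<and> x \<notin> F h a"] avoidable
      unfolding g_def[symmetric] by (metis (mono_tags, lifting) someI_ex)
  qed
  then show ?thesis by blast
qed

text \<open>Both the stages of the construction and the codes of curves are sets of naturals, taken in
  the order of a cardinal well-order of type continuum: every initial segment is small.\<close>

abbreviation before :: "nat set \<Rightarrow> nat set set" where
  "before a \<equiv> underS |UNIV :: nat set set| a"

lemma small_before: "small (before a)"
proof -
  have "|before a| <o |UNIV :: nat set set|"
    by (rule card_of_underS[OF card_of_Card_order]) (simp add: Field_card_of)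
  moreover have "|UNIV :: nat set set| =o |UNIV :: real set|"
    using nat_sets_eqpoll_reals eqpoll_iff_card_of_ordIso by blast
  ultimately show ?thesis unfolding small_def by (rule ordLess_ordIso_trans)
qed

lemma before_total: "a \<noteq> b \<Longrightarrow> a \<in> before b \<or> b \<in> before a"
proof -
  assume "a \<noteq> b"
  have wo: "wo_rel |UNIV :: nat set set|" unfolding wo_rel_def by (rule card_of_Well_order)
  have "(a, b) \<in> |UNIV :: nat set set| \<or> (b, a) \<in> |UNIV :: nat set set|"
    using wo_rel.TOTALS[OF wo] unfolding Field_card_of by blast
  with \<open>a \<noteq> b\<close> show ?thesis unfolding underS_def by auto
qed

lemma before_trans: "a \<in> before b \<Longrightarrow> b \<in> before c \<Longrightarrow> a \<in> before c"
proof -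
  assume "a \<in> before b" "b \<in> before c"
  then have ab: "(a, b) \<in> |UNIV :: nat set set|" "a \<noteq> b"
    and bc: "(b, c) \<in> |UNIV :: nat set set|" "b \<noteq> c"
    unfolding underS_def by auto
  have "wo_rel |UNIV :: nat set set|" unfolding wo_rel_def by (rule card_of_Well_order)
  then have "trans |UNIV :: nat set set|" "antisym |UNIV :: nat set set|"
    using wo_rel.TRANS wo_rel.ANTISYM by blast+
  with ab bc have "(a, c) \<in> |UNIV :: nat set set|" "a \<noteq> c"
    unfolding trans_def antisym_def by blast+
  then show "a \<in> before c" unfolding underS_def by auto
qed

text \<open>At stage \<open>a\<close> the new real must avoid the degrees of all reals that some curve coded before
  \<open>a\<close> links to an earlier chosen degree.\<close>

definition linked :: "(nat set \<Rightarrow> real) \<Rightarrow> nat set \<Rightarrow> real set" where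
  "linked g a = {x. \<exists>b\<in>before a. \<exists>c\<in>before a. \<exists>y\<in>tdeg (g b).
                      (x, y) \<in> monotone_curves c \<or> (y, x) \<in> monotone_curves c}"

definition forbidden :: "(nat set \<Rightarrow> real) \<Rightarrow> nat set \<Rightarrow> real set" where
  "forbidden g a = (\<Union>x\<in>linked g a. tdeg x) \<union> g ` before a"

lemma small_linked: "small (linked g a)"
proof -
  have "linked g a \<subseteq> (\<Union>(b, c)\<in>before a \<times> before a. \<Union>y\<in>tdeg (g b).
          {x. (x, y) \<in> monotone_curves c} \<union> {x. (y, x) \<in> monotone_curves c})"
    unfolding linked_def by force
  moreover have "small (\<Union>(b, c)\<in>before a \<times> before a. \<Union>y\<in>tdeg (g b).
          {x. (x, y) \<in> monotone_curves c} \<union> {x. (y, x) \<in> monotone_curves c})"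
    using small_Times[OF small_before] countable_tdeg countable_row_monotone_curves
      countable_column_monotone_curves
    by (intro small_UN) (auto intro!: countable_UN)
  ultimately show ?thesis by (rule small_subset)
qed

lemma small_forbidden: "small (forbidden g a)"
  unfolding forbidden_def
  by (intro small_Un small_UN small_linked small_image small_before countable_tdeg)

lemma forbidden_cong: "(\<forall>b\<in>before a. h b = h' b) \<Longrightarrow> forbidden h a = forbidden h' a"
  unfolding forbidden_def linked_def by (auto simp: image_iff)

lemma exists_avoiding_antichain:
  "\<exists>g :: nat set \<Rightarrow> real. (\<forall>a b. a \<noteq> b \<longrightarrow> \<not> g a \<le>\<^sub>T g b) \<and> (\<forall>a. g a \<notin> forbidden g a)"
proof -
  obtain G :: "nat set \<Rightarrow> real" where G: "\<And>A B. A \<noteq> B \<Longrightarrow> \<not> G A \<le>\<^sub>T G B"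
    using perfect_turing_antichain by blast
  then have "inj G" by (metis injI turing_le_refl)
  then have "range G \<approx> (UNIV :: real set)"
    using eqpoll_trans[OF inj_on_image_eqpoll_self nat_sets_eqpoll_reals] by blast
  then have "\<not> range G \<subseteq> forbidden h a" for h a
    using small_forbidden small_subset small_eqpoll not_small_UNIV_real eqpoll_sym by metis
  then have "\<exists>g. \<forall>a. g a \<in> range G \<and> g a \<notin> forbidden g a"
    by (intro wellorder_avoiding_choice[OF card_of_Well_order] forbidden_cong) auto
  then obtain g where g: "\<And>a. g a \<in> range G \<and> g a \<notin> forbidden g a"
    by blast
  have "g a \<noteq> g b" if "b \<in> before a" for a b
    using g[of a] that unfolding forbidden_def by blast
  then have "g a \<noteq> g b" if "a \<noteq> b" for a b
    using before_total[OF that] by metis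
  then have "\<not> g a \<le>\<^sub>T g b" if "a \<noteq> b" for a b
    using g G that by (metis rangeE)
  then show ?thesis using g by blast
qed

locale avoiding_antichain =
  fixes g :: "nat set \<Rightarrow> real"
  assumes antichain: "a \<noteq> b \<Longrightarrow> \<not> g a \<le>\<^sub>T g b"
    and avoids_forbidden: "g a \<notin> forbidden g a"
begin

definition degrees :: "real set set" where
  "degrees = tdeg ` range g"

lemma tdeg_g_eq_iff: "tdeg (g a) = tdeg (g b) \<longleftrightarrow> a = b"
  using antichain turing_le_refl by (auto simp: tdeg_eq_iff turing_equiv_def)

lemma degrees_eqpoll: "degrees \<approx> (UNIV :: real set)"
proof -
  have "inj (\<lambda>a. tdeg (g a))" by (rule injI) (simp add: tdeg_g_eq_iff)
  then show ?thesis
    unfolding degrees_def image_image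
    using eqpoll_trans[OF inj_on_image_eqpoll_self nat_sets_eqpoll_reals] by blast
qed

lemma degree_antichain_degrees: "degree_antichain degrees"
  unfolding degree_antichain_def
proof (intro ballI impI notI)
  fix D E assume "D \<in> degrees" "E \<in> degrees" "D \<noteq> E" "degree_le D E"
  then obtain a b x y where "D = tdeg (g a)" "E = tdeg (g b)" "a \<noteq> b"
    and "x \<in> D" "y \<in> E" "x \<le>\<^sub>T y"
    unfolding degrees_def degree_le_def by blast
  then have "g a \<le>\<^sub>T g b"
    unfolding tdeg_def turing_equiv_def by (blast intro: turing_le_trans)
  with \<open>a \<noteq> b\<close> show False using antichain by blast
qed

lemma mem_reals_of_degrees: "x \<in> reals_of_degrees degrees \<longleftrightarrow> (\<exists>a. x \<equiv>\<^sub>T g a)"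
  unfolding reals_of_degrees_def degrees_def by (auto simp: tdeg_eq_iff)

lemma not_linked: "x \<equiv>\<^sub>T g a \<Longrightarrow> x \<notin> linked g a"
  using avoids_forbidden[of a] turing_equiv_sym unfolding forbidden_def tdeg_def by blast

text \<open>A pair on the curve coded by \<open>c\<close> joining two chosen degrees must have both degrees chosen
  no later than \<open>c\<close>: otherwise the later of the two would have been linked at its own stage.\<close>

lemma chosen_no_later_than_curve:
  assumes \<alpha>: "x \<equiv>\<^sub>T g \<alpha>" and \<beta>: "y \<equiv>\<^sub>T g \<beta>" and "\<alpha> \<noteq> \<beta>"
    and xy: "(x, y) \<in> monotone_curves c"
  shows "\<alpha> \<in> insert c (before c)"
proof (rule ccontr)
  assume "\<alpha> \<notin> insert c (before c)"
  then have c\<alpha>: "c \<in> before \<alpha>" using before_total by blast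
  show False
  proof (cases "\<beta> \<in> before \<alpha>")
    case True
    then have "x \<in> linked g \<alpha>"
      using c\<alpha> xy \<beta> unfolding linked_def tdeg_def by blast
    then show False using not_linked[OF \<alpha>] by blast
  next
    case False
    then have "\<alpha> \<in> before \<beta>" using before_total \<open>\<alpha> \<noteq> \<beta>\<close> by blast
    then have "y \<in> linked g \<beta>"
      using before_trans[OF c\<alpha>] xy \<alpha> unfolding linked_def tdeg_def by blast
    then show False using not_linked[OF \<beta>] by blast
  qed
qed

lemma small_inter_monotone_curves:
  assumes C: "C \<subseteq> reals_of_degrees degrees \<times> reals_of_degrees degrees"
    and distinct: "\<forall>(x, y)\<in>C. tdeg x \<noteq> tdeg y"
    and inj: "inj_on fst C"
  shows "small (C \<inter> monotone_curves c)"
proof -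
  have "fst ` (C \<inter> monotone_curves c) \<subseteq> (\<Union>a\<in>insert c (before c). tdeg (g a))"
  proof
    fix x assume "x \<in> fst ` (C \<inter> monotone_curves c)"
    then obtain y where xy: "(x, y) \<in> C" "(x, y) \<in> monotone_curves c" by force
    obtain \<alpha> \<beta> where \<alpha>: "x \<equiv>\<^sub>T g \<alpha>" and \<beta>: "y \<equiv>\<^sub>T g \<beta>"
      using xy(1) C mem_reals_of_degrees by blast
    have "\<alpha> \<noteq> \<beta>"
      using distinct xy(1) \<alpha> \<beta> by (auto simp: tdeg_eq_iff[symmetric])
    then have "\<alpha> \<in> insert c (before c)"
      using chosen_no_later_than_curve[OF \<alpha> \<beta> _ xy(2)] by blast
    then show "x \<in> (\<Union>a\<in>insert c (before c). tdeg (g a))"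
      using \<alpha> unfolding tdeg_def by blast
  qed
  moreover have "small (\<Union>a\<in>insert c (before c). tdeg (g a))"
    using small_Un[OF countable_imp_small[of "{c}"] small_before]
    by (intro small_UN countable_tdeg) simp_all
  ultimately have "small (fst ` (C \<inter> monotone_curves c))" by (rule small_subset)
  then show ?thesis
    using inj_on_image_eqpoll_self[OF inj_on_subset[OF inj]] small_eqpoll eqpoll_sym by blast
qed

lemma increasing_and_decreasing_pairs:
  assumes "C \<approx> (UNIV :: real set)" "pairwise_disjoint_pairs C"
    and "C \<subseteq> reals_of_degrees degrees \<times> reals_of_degrees degrees"
    and "\<forall>(x, y)\<in>C. tdeg x \<noteq> tdeg y"
  shows "\<not> no_increasing_pair C" and "\<not> no_increasing_pair (mirror C)"
proof -
  have "inj_on fst C" "inj_on snd C"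
    using assms(2) unfolding pairwise_disjoint_pairs_def inj_on_def
    by (metis insert_disjoint(1) insert_iff)+
  moreover have "\<not> small C"
    using assms(1) small_eqpoll not_small_UNIV_real eqpoll_sym by blast
  ultimately have "\<not> countable (C - monotone_curves c)" for c
    using small_inter_monotone_curves[OF assms(3,4)] countable_imp_small small_Un
    by (metis Int_Diff_Un)
  then show "\<not> no_increasing_pair C" and "\<not> no_increasing_pair (mirror C)"
    using monotone_curves_cover \<open>inj_on fst C\<close> \<open>inj_on snd C\<close> by blast+
qed

end

theorem mainTheorem18:
  assumes "cov_eq_continuum meager \<or> cov_eq_continuum lebesgue_null"
  shows "\<exists>S. (\<forall>D\<in>S. is_turing_degree D) \<and> S \<approx> (UNIV :: real set) \<and> degree_antichain S \<and>
    (\<forall>C. C \<approx> (UNIV :: real set) \<and> pairwise_disjoint_pairs C \<and>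
         C \<subseteq> reals_of_degrees S \<times> reals_of_degrees S \<and>
         (\<forall>(x,y)\<in>C. tdeg x \<noteq> tdeg y) \<longrightarrow>
       (\<exists>x1 y1 x2 y2. (x1,y1) \<in> C \<and> (x2,y2) \<in> C \<and> x1 < x2 \<and> y1 < y2) \<and>
       (\<exists>w1 z1 w2 z2. (w1,z1) \<in> C \<and> (w2,z2) \<in> C \<and> w1 < w2 \<and> z1 > z2))"
proof -
  obtain g where "avoiding_antichain g"
    using exists_avoiding_antichain unfolding avoiding_antichain_def by blast
  then interpret avoiding_antichain g .
  show ?thesis
  proof (intro exI[of _ degrees] conjI allI impI)
    show "\<forall>D\<in>degrees. is_turing_degree D"
      unfolding degrees_def is_turing_degree_def by blast
    show "degrees \<approx> (UNIV :: real set)" by (rule degrees_eqpoll)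
    show "degree_antichain degrees" by (rule degree_antichain_degrees)
  next
    fix C assume "C \<approx> (UNIV :: real set) \<and> pairwise_disjoint_pairs C \<and>
      C \<subseteq> reals_of_degrees degrees \<times> reals_of_degrees degrees \<and> (\<forall>(x,y)\<in>C. tdeg x \<noteq> tdeg y)"
    then show "\<exists>x1 y1 x2 y2. (x1,y1) \<in> C \<and> (x2,y2) \<in> C \<and> x1 < x2 \<and> y1 < y2"
      using increasing_and_decreasing_pairs(1) unfolding no_increasing_pair_def by blast
  next
    fix C assume "C \<approx> (UNIV :: real set) \<and> pairwise_disjoint_pairs C \<and>
      C \<subseteq> reals_of_degrees degrees \<times> reals_of_degrees degrees \<and> (\<forall>(x,y)\<in>C. tdeg x \<noteq> tdeg y)"
    then show "\<exists>w1 z1 w2 z2. (w1,z1) \<in> C \<and> (w2,z2) \<in> C \<and> w1 < w2 \<and> z1 > z2"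
      using increasing_and_decreasing_pairs(2) unfolding no_increasing_pair_mirror_iff by blast
  qed
qed

end
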